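(* Let $\mathbb{A}$ be a Boolean algebra with the Grothendieck property and $(\mathbb{B},\mu)$ a metric Boolean algebra. If a sequence $(\varphi_n)$ in $\mathcal{H}(\mathbb{A},\mathbb{B})$ converges pointwise metric to $\varphi\in\mathcal{H}(\mathbb{A},\mathbb{B})$, then $(\varphi_n)$ converges pointwise Borel metric to $\varphi$.
   Context: $\mathbb{A}$ has the Grothendieck property if every weak* convergent sequence of (signed) Radon measures on the Stone space $St(\mathbb{A})$ is weakly convergent (weak* with respect to $C(St(\mathbb{A}))$, weak in $C(St(\mathbb{A}))^*$). A metric Boolean algebra $(\mathbb{B},\mu)$ is a Boolean algebra with a strictly positive finitely additive probability measure $\mu$; $d_\mu(A,B)=\mu(A\triangle B)$. $\mathcal{H}(\mathbb{A},\mathbb{B})$ is the set of homomorphisms $\mathbb{A}\to\mathbb{B}$. Algebras are identified with the clopen algebras of their Stone spaces; $\widehat{\mu}$ is the Radon extension of $\mu$ to $St(\mathbb{B})$; $f_\varphi\colon St(\mathbb{B})\to St(\mathbb{A})$, $f_\varphi(x)=\varphi^{-1}[x]$. Pointwise metric convergence: $d_\mu(\varphi_n(A),\varphi(A))\to0$ for each $A\in\mathbb{A}$. Pointwise Borel metric convergence: $\widehat{\mu}(f_{\varphi_n}^{-1}[B]\triangle f_\varphi^{-1}[B])\to0$ for every Borel $B\subseteq St(\mathbb{A})$. *)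

theory Defs
  imports "HOL-Analysis.Analysis"
begin

definition ultrafilter :: "'a::boolean_algebra set \<Rightarrow> bool" where
  "ultrafilter U \<longleftrightarrow> top \<in> U \<and> bot \<notin> U \<and>
     (\<forall>a\<in>U. \<forall>b\<in>U. inf a b \<in> U) \<and>
     (\<forall>a b. a \<in> U \<and> a \<le> b \<longrightarrow> b \<in> U) \<and>
     (\<forall>a. a \<in> U \<or> - a \<in> U)"

definition St :: "'a::boolean_algebra itself \<Rightarrow> 'a set set" where
  "St _ = {U. ultrafilter U}"

definition clopen_of :: "'a::boolean_algebra \<Rightarrow> 'a set set" where
  "clopen_of a = {U. ultrafilter U \<and> a \<in> U}"

definition stone_top :: "'a::boolean_algebra itself \<Rightarrow> 'a set topology" where
  "stone_top _ = topology_generated_by (range (clopen_of :: 'a \<Rightarrow> 'a set set))"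

definition borel_sets :: "'x topology \<Rightarrow> 'x set set" where
  "borel_sets X = sigma_sets (topspace X) {U. openin X U}"

definition radon_measure :: "'x topology \<Rightarrow> 'x measure \<Rightarrow> bool" where
  "radon_measure X M \<longleftrightarrow> space M = topspace X \<and> sets M = borel_sets X \<and>
     finite_measure M \<and>
     (\<forall>B \<in> borel_sets X. emeasure M B = (SUP K \<in> {K. compactin X K \<and> K \<subseteq> B}. emeasure M K))"

text \<open>Signed Radon measures, as real-valued set functions on Borel sets
  (set to 0 outside the Borel sets): differences of two finite Radon measures.\<close>
definition signed_radon :: "'x topology \<Rightarrow> ('x set \<Rightarrow> real) \<Rightarrow> bool" where
  "signed_radon X \<nu> \<longleftrightarrow> (\<exists>M1 M2. radon_measure X M1 \<and> radon_measure X M2 \<and>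
     (\<forall>B. \<nu> B = (if B \<in> borel_sets X then measure M1 B - measure M2 B else 0)))"

definition radon_decomp :: "'x topology \<Rightarrow> ('x set \<Rightarrow> real) \<Rightarrow> 'x measure \<times> 'x measure" where
  "radon_decomp X \<nu> = (SOME (M1, M2). radon_measure X M1 \<and> radon_measure X M2 \<and>
     (\<forall>B. \<nu> B = (if B \<in> borel_sets X then measure M1 B - measure M2 B else 0)))"

text \<open>Integral of a (continuous) function against a signed Radon measure
  (independent of the chosen decomposition).\<close>
definition signed_integral :: "'x topology \<Rightarrow> ('x set \<Rightarrow> real) \<Rightarrow> ('x \<Rightarrow> real) \<Rightarrow> real" where
  "signed_integral X \<nu> f = (integral\<^sup>L (fst (radon_decomp X \<nu>)) f - integral\<^sup>L (snd (radon_decomp X \<nu>)) f)"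

definition tv_norm :: "'x topology \<Rightarrow> ('x set \<Rightarrow> real) \<Rightarrow> real" where
  "tv_norm X \<nu> = (SUP P \<in> {P. finite P \<and> P \<subseteq> borel_sets X \<and> disjoint P}. \<Sum>B\<in>P. \<bar>\<nu> B\<bar>)"

text \<open>Bounded linear functionals on the Banach space of signed Radon measures
  (i.e. elements of the dual of C(X)^*, via the Riesz representation).\<close>
definition bounded_functional :: "'x topology \<Rightarrow> (('x set \<Rightarrow> real) \<Rightarrow> real) \<Rightarrow> bool" where
  "bounded_functional X \<Lambda> \<longleftrightarrow>
     (\<forall>\<nu> \<nu>'. signed_radon X \<nu> \<and> signed_radon X \<nu>' \<longrightarrow> \<Lambda> (\<lambda>B. \<nu> B + \<nu>' B) = \<Lambda> \<nu> + \<Lambda> \<nu>') \<and>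
     (\<forall>\<nu> c. signed_radon X \<nu> \<longrightarrow> \<Lambda> (\<lambda>B. c * \<nu> B) = c * \<Lambda> \<nu>) \<and>
     (\<exists>C. \<forall>\<nu>. signed_radon X \<nu> \<longrightarrow> \<bar>\<Lambda> \<nu>\<bar> \<le> C * tv_norm X \<nu>)"

definition weak_star_conv :: "'x topology \<Rightarrow> (nat \<Rightarrow> 'x set \<Rightarrow> real) \<Rightarrow> ('x set \<Rightarrow> real) \<Rightarrow> bool" where
  "weak_star_conv X \<nu>s \<nu> \<longleftrightarrow> (\<forall>f. continuous_map X euclideanreal f \<longrightarrow>
      (\<lambda>n. signed_integral X (\<nu>s n) f) \<longlonglongrightarrow> signed_integral X \<nu> f)"

definition weak_conv :: "'x topology \<Rightarrow> (nat \<Rightarrow> 'x set \<Rightarrow> real) \<Rightarrow> ('x set \<Rightarrow> real) \<Rightarrow> bool" where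
  "weak_conv X \<nu>s \<nu> \<longleftrightarrow> (\<forall>\<Lambda>. bounded_functional X \<Lambda> \<longrightarrow> (\<lambda>n. \<Lambda> (\<nu>s n)) \<longlonglongrightarrow> \<Lambda> \<nu>)"

definition grothendieck_property :: "'a::boolean_algebra itself \<Rightarrow> bool" where
  "grothendieck_property A \<longleftrightarrow> (\<forall>\<nu>s \<nu>. (\<forall>n. signed_radon (stone_top A) (\<nu>s n)) \<and>
      signed_radon (stone_top A) \<nu> \<and> weak_star_conv (stone_top A) \<nu>s \<nu> \<longrightarrow>
      weak_conv (stone_top A) \<nu>s \<nu>)"

definition metric_ba :: "('b::boolean_algebra \<Rightarrow> real) \<Rightarrow> bool" where
  "metric_ba \<mu> \<longleftrightarrow> \<mu> top = 1 \<and> (\<forall>a. a \<noteq> bot \<longrightarrow> \<mu> a > 0) \<and> \<mu> bot = 0 \<and>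
     (\<forall>a b. inf a b = bot \<longrightarrow> \<mu> (sup a b) = \<mu> a + \<mu> b)"

definition sym_diff :: "'a::boolean_algebra \<Rightarrow> 'a \<Rightarrow> 'a" where
  "sym_diff a b = sup (a - b) (b - a)"

definition d_metric :: "('b::boolean_algebra \<Rightarrow> real) \<Rightarrow> 'b \<Rightarrow> 'b \<Rightarrow> real" where
  "d_metric \<mu> a b = \<mu> (sym_diff a b)"

definition ba_hom :: "('a::boolean_algebra \<Rightarrow> 'b::boolean_algebra) \<Rightarrow> bool" where
  "ba_hom \<phi> \<longleftrightarrow> \<phi> bot = bot \<and> \<phi> top = top \<and> (\<forall>a b. \<phi> (sup a b) = sup (\<phi> a) (\<phi> b)) \<and>
     (\<forall>a b. \<phi> (inf a b) = inf (\<phi> a) (\<phi> b)) \<and> (\<forall>a. \<phi> (- a) = - \<phi> a)"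

definition stone_map :: "('a::boolean_algebra \<Rightarrow> 'b::boolean_algebra) \<Rightarrow> 'b set \<Rightarrow> 'a set" where
  "stone_map \<phi> x = \<phi> -` x"

definition radon_extension :: "('b::boolean_algebra \<Rightarrow> real) \<Rightarrow> 'b set measure \<Rightarrow> bool" where
  "radon_extension \<mu> M \<longleftrightarrow> radon_measure (stone_top TYPE('b)) M \<and>
     (\<forall>b. measure M (clopen_of b) = \<mu> b)"

definition pointwise_metric_conv ::
  "('b::boolean_algebra \<Rightarrow> real) \<Rightarrow> (nat \<Rightarrow> 'a::boolean_algebra \<Rightarrow> 'b) \<Rightarrow> ('a \<Rightarrow> 'b) \<Rightarrow> bool" where
  "pointwise_metric_conv \<mu> \<phi>s \<phi> \<longleftrightarrow> (\<forall>a. (\<lambda>n. d_metric \<mu> (\<phi>s n a) (\<phi> a)) \<longlonglongrightarrow> 0)"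

definition pointwise_borel_metric_conv ::
  "'b set measure \<Rightarrow> (nat \<Rightarrow> 'a::boolean_algebra \<Rightarrow> 'b::boolean_algebra) \<Rightarrow> ('a \<Rightarrow> 'b) \<Rightarrow> bool" where
  "pointwise_borel_metric_conv M \<phi>s \<phi> \<longleftrightarrow>
     (\<forall>B \<in> borel_sets (stone_top TYPE('a)).
        (\<lambda>n. measure M (let P = stone_map (\<phi>s n) -` B \<inter> St TYPE('b); Q = stone_map \<phi> -` B \<inter> St TYPE('b) in (P - Q) \<union> (Q - P)))
          \<longlonglongrightarrow> 0)"

end

theory Submission
  imports Defs
begin

(*
  A homomorphism phi induces the continuous map f_phi : St(B) -> St(A), and for every Borel
  set D of St(B) the image of mu_hat restricted to D under f_phi is a Radon measure on St(A).
  A continuous g on the compact space St(A) varies by less than e on each member of a finite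
  clopen cover a_1, ..., a_k. Off the clopen set where phi_n and phi disagree on some a_i,
  whose measure is at most the sum of the d_mu(phi_n(a_i), phi(a_i)), the functions g o f_phi_n
  and g o f_phi are e-close; hence pointwise metric convergence gives weak* convergence of the
  image measures. The Grothendieck property upgrades this to weak convergence, and evaluation
  at a Borel set is a bounded functional, so the measures of the preimages of B inside D
  converge. Taking for D the preimage of B under f_phi and its complement shows that the
  symmetric differences have vanishing measure.
*)

section \<open>Ultrafilters of a Boolean algebra\<close>

lemma ultrafilter_top: "ultrafilter U \<Longrightarrow> top \<in> U"
  by (simp add: ultrafilter_def)

lemma ultrafilter_bot: "ultrafilter U \<Longrightarrow> bot \<notin> U"
  by (simp add: ultrafilter_def)

lemma ultrafilter_inf_iff: "ultrafilter U \<Longrightarrow> inf a b \<in> U \<longleftrightarrow> a \<in> U \<and> b \<in> U"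
  unfolding ultrafilter_def by (metis inf.cobounded1 inf.cobounded2)

lemma ultrafilter_mono: "ultrafilter U \<Longrightarrow> a \<in> U \<Longrightarrow> a \<le> b \<Longrightarrow> b \<in> U"
  unfolding ultrafilter_def by blast

lemma ultrafilter_compl_iff: "ultrafilter U \<Longrightarrow> - a \<in> U \<longleftrightarrow> a \<notin> U"
  unfolding ultrafilter_def by (metis inf_compl_bot)

lemma ultrafilter_sup_iff: "ultrafilter U \<Longrightarrow> sup a b \<in> U \<longleftrightarrow> a \<in> U \<or> b \<in> U"
  by (metis compl_sup ultrafilter_compl_iff ultrafilter_inf_iff)

lemma ultrafilter_sym_diff_iff:
  "ultrafilter U \<Longrightarrow> sym_diff a b \<in> U \<longleftrightarrow> \<not> (a \<in> U \<longleftrightarrow> b \<in> U)"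
  by (auto simp: sym_diff_def diff_eq ultrafilter_sup_iff ultrafilter_inf_iff ultrafilter_compl_iff)

definition ba_filter :: "'a::boolean_algebra set \<Rightarrow> bool" where
  "ba_filter F \<longleftrightarrow> top \<in> F \<and> bot \<notin> F \<and>
     (\<forall>a\<in>F. \<forall>b\<in>F. inf a b \<in> F) \<and> (\<forall>a b. a \<in> F \<and> a \<le> b \<longrightarrow> b \<in> F)"

lemma maximal_ba_filter_is_ultrafilter:
  assumes M: "ba_filter M" and max: "\<And>F. ba_filter F \<Longrightarrow> M \<subseteq> F \<Longrightarrow> F = M"
  shows "ultrafilter M"
proof -
  have "a \<in> M \<or> - a \<in> M" for a
  proof (rule ccontr)
    assume a: "\<not> (a \<in> M \<or> - a \<in> M)"
    define M' where "M' = {c. \<exists>m\<in>M. inf m a \<le> c}"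
    have "bot \<notin> M'"
    proof
      assume "bot \<in> M'"
      then obtain m where "m \<in> M" "inf m a \<le> bot" by (auto simp: M'_def)
      then have "m \<le> - a" by (simp add: inf_shunt bot_unique)
      with a \<open>m \<in> M\<close> M show False by (auto simp: ba_filter_def)
    qed
    moreover have "inf p q \<in> M'" if pq: "p \<in> M'" "q \<in> M'" for p q
    proof -
      obtain m1 m2 where "m1 \<in> M" "inf m1 a \<le> p" "m2 \<in> M" "inf m2 a \<le> q"
        using pq unfolding M'_def by blast
      moreover from this have "inf (inf m1 m2) a \<le> inf p q"
        by (metis inf.absorb_iff2 inf.coboundedI1 inf.coboundedI2 inf_commute inf_left_commute le_inf_iff)
      ultimately show ?thesis using M unfolding M'_def ba_filter_def by blast
    qed
    moreover have "top \<in> M'"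
      using M by (auto simp: M'_def ba_filter_def)
    moreover have "q \<in> M'" if "p \<in> M'" "p \<le> q" for p q
      using that unfolding M'_def by (blast intro: order_trans)
    ultimately have "ba_filter M'"
      unfolding ba_filter_def by blast
    moreover have "M \<subseteq> M'"
      unfolding M'_def using inf_le1 by blast
    moreover have "a \<in> M'"
      unfolding M'_def using M inf_le2 by (auto simp: ba_filter_def)
    ultimately show False using max a by blast
  qed
  with M show ?thesis by (simp add: ultrafilter_def ba_filter_def)
qed

lemma ba_filter_extends_to_ultrafilter:
  assumes "ba_filter G"
  shows "\<exists>U. ultrafilter U \<and> G \<subseteq> U"
proof -
  let ?S = "{F. ba_filter F \<and> G \<subseteq> F}"
  have "\<Union>C \<in> ?S" if C: "C \<noteq> {}" "subset.chain ?S C" for C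
  proof -
    have filter: "ba_filter F" and sub: "G \<subseteq> F" if "F \<in> C" for F
      using C(2) that by (auto simp: subset.chain_def)
    obtain F0 where F0: "F0 \<in> C" using C(1) by blast
    have "ba_filter (\<Union>C)"
      unfolding ba_filter_def
    proof (intro conjI ballI allI impI)
      show "top \<in> \<Union>C" using F0 filter[OF F0] by (auto simp: ba_filter_def)
      show "bot \<notin> \<Union>C" using filter by (auto simp: ba_filter_def)
    next
      fix a b assume "a \<in> \<Union>C" "b \<in> \<Union>C"
      then obtain F where "F \<in> C" "a \<in> F" "b \<in> F"
        using C(2) unfolding subset.chain_def by blast
      then show "inf a b \<in> \<Union>C" using filter[of F] by (auto simp: ba_filter_def)
    next
      fix a b assume "a \<in> \<Union>C \<and> a \<le> b"
      then obtain F where "F \<in> C" "a \<in> F" "a \<le> b" by blast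
      then show "b \<in> \<Union>C" using filter[of F] unfolding ba_filter_def by blast
    qed
    then show ?thesis using F0 sub by blast
  qed
  moreover have "?S \<noteq> {}" using assms by blast
  ultimately obtain M where "M \<in> ?S" "\<forall>F\<in>?S. M \<subseteq> F \<longrightarrow> F = M"
    using subset_Zorn_nonempty[of ?S] by meson
  then have "ultrafilter M"
    by (intro maximal_ba_filter_is_ultrafilter) auto
  with \<open>M \<in> ?S\<close> show ?thesis by blast
qed

section \<open>The Stone space\<close>

lemma topspace_stone_top: "topspace (stone_top TYPE('a::boolean_algebra)) = Collect ultrafilter"
  unfolding stone_top_def topology_generated_by_topspace
  by (auto simp: clopen_of_def intro: ultrafilter_top)

lemma openin_clopen_of: "openin (stone_top TYPE('a::boolean_algebra)) (clopen_of a)"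
  unfolding stone_top_def by (rule topology_generated_by_Basis) simp

lemma clopen_of_inf: "clopen_of (inf a b) = clopen_of a \<inter> clopen_of b"
  by (auto simp: clopen_of_def ultrafilter_inf_iff)

lemma stone_top_clopen_basis:
  assumes "openin (stone_top TYPE('a::boolean_algebra)) S" "x \<in> S"
  shows "\<exists>a. x \<in> clopen_of a \<and> clopen_of a \<subseteq> S"
proof -
  have "generate_topology_on (range (clopen_of :: 'a \<Rightarrow> _)) S"
    using assms(1) unfolding stone_top_def by (rule openin_topology_generated_by)
  then show ?thesis using assms(2)
  proof (induction arbitrary: x)
    case Empty then show ?case by simp
  next
    case (Int S T)
    then obtain a b where "x \<in> clopen_of a" "clopen_of a \<subseteq> S" "x \<in> clopen_of b" "clopen_of b \<subseteq> T"
      by blast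
    then show ?case by (intro exI[of _ "inf a b"]) (auto simp: clopen_of_inf)
  next
    case (UN K)
    then obtain k where "k \<in> K" "x \<in> k" by blast
    with UN show ?case by blast
  next
    case (Basis S) then show ?case by blast
  qed
qed

lemma Hausdorff_space_stone_top: "Hausdorff_space (stone_top TYPE('a::boolean_algebra))"
  unfolding Hausdorff_space_def topspace_stone_top
proof (intro allI impI, elim conjE)
  fix x y :: "'a set"
  assume x: "x \<in> Collect ultrafilter" and y: "y \<in> Collect ultrafilter" and "x \<noteq> y"
  then obtain a where a: "a \<in> x" "a \<notin> y" using ultrafilter_compl_iff by blast
  then have "x \<in> clopen_of a" "y \<in> clopen_of (- a)" "disjnt (clopen_of a) (clopen_of (- a))"
    using x y by (auto simp: clopen_of_def ultrafilter_compl_iff disjnt_def)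
  then show "\<exists>U V. openin (stone_top TYPE('a)) U \<and> openin (stone_top TYPE('a)) V \<and>
      x \<in> U \<and> y \<in> V \<and> disjnt U V"
    using openin_clopen_of by blast
qed

text \<open>If no finite subfamily of A covers, the complements of the members of A generate a
  proper filter; an ultrafilter extending it is then covered by no member of A.\<close>

lemma clopen_cover_finite_subcover:
  fixes A :: "'a::boolean_algebra set"
  assumes cover: "\<And>x. ultrafilter x \<Longrightarrow> \<exists>a\<in>A. a \<in> x"
  shows "\<exists>F\<subseteq>A. finite F \<and> (\<forall>x. ultrafilter x \<longrightarrow> (\<exists>a\<in>F. a \<in> x))"
proof (rule ccontr)
  assume no_subcover: "\<not> ?thesis"
  define avoids where "avoids F U \<longleftrightarrow> ultrafilter U \<and> (\<forall>a\<in>F. a \<notin> U)" for F U :: "'a set"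
  define G where "G = {c. \<exists>F\<subseteq>A. finite F \<and> (\<forall>U. avoids F U \<longrightarrow> c \<in> U)}"
  have "ba_filter G"
    unfolding ba_filter_def
  proof (intro conjI ballI allI impI)
    show "top \<in> G" unfolding G_def avoids_def by (auto intro: ultrafilter_top)
    show "bot \<notin> G"
    proof
      assume "bot \<in> G"
      then obtain F where "F \<subseteq> A" "finite F" "\<forall>U. avoids F U \<longrightarrow> bot \<in> U"
        unfolding G_def by blast
      moreover obtain U where "avoids F U"
        using no_subcover calculation(1,2) unfolding avoids_def by blast
      ultimately show False using ultrafilter_bot unfolding avoids_def by blast
    qed
  next
    fix a b assume "a \<in> G" "b \<in> G"
    then obtain F1 F2 where F1: "F1 \<subseteq> A" "finite F1" "\<forall>U. avoids F1 U \<longrightarrow> a \<in> U"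
      and F2: "F2 \<subseteq> A" "finite F2" "\<forall>U. avoids F2 U \<longrightarrow> b \<in> U"
      unfolding G_def by blast
    have "\<forall>U. avoids (F1 \<union> F2) U \<longrightarrow> inf a b \<in> U"
      using F1(3) F2(3) by (auto simp: avoids_def ultrafilter_inf_iff)
    then show "inf a b \<in> G"
      unfolding G_def using F1(1,2) F2(1,2) by (intro CollectI exI[of _ "F1 \<union> F2"]) auto
  next
    fix a b assume ab: "a \<in> G \<and> a \<le> b"
    then obtain F where "F \<subseteq> A" "finite F" "\<forall>U. avoids F U \<longrightarrow> a \<in> U"
      unfolding G_def by blast
    moreover have "\<forall>U. avoids F U \<longrightarrow> b \<in> U"
      using calculation(3) ab ultrafilter_mono unfolding avoids_def by blast
    ultimately show "b \<in> G" unfolding G_def by blast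
  qed
  then obtain U where U: "ultrafilter U" "G \<subseteq> U"
    using ba_filter_extends_to_ultrafilter by blast
  then obtain a where "a \<in> A" "a \<in> U" using cover by blast
  moreover have "\<forall>V. avoids {a} V \<longrightarrow> - a \<in> V"
    by (simp add: avoids_def ultrafilter_compl_iff)
  then have "- a \<in> G"
    unfolding G_def using \<open>a \<in> A\<close> by (intro CollectI exI[of _ "{a}"]) auto
  ultimately show False using U ultrafilter_compl_iff by blast
qed

lemma compact_space_stone_top: "compact_space (stone_top TYPE('a::boolean_algebra))"
  unfolding compact_space_alt
proof (intro allI impI, elim conjE)
  fix \<U> assume opens: "\<forall>U\<in>\<U>. openin (stone_top TYPE('a)) U"
    and cover: "topspace (stone_top TYPE('a)) \<subseteq> \<Union>\<U>"
  define A where "A = {a. \<exists>U\<in>\<U>. clopen_of a \<subseteq> U}"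
  have "\<exists>a\<in>A. a \<in> x" if x: "ultrafilter x" for x
  proof -
    obtain U where "U \<in> \<U>" "x \<in> U" using cover x by (auto simp: topspace_stone_top)
    then obtain a where "x \<in> clopen_of a" "clopen_of a \<subseteq> U"
      using opens stone_top_clopen_basis by blast
    then show ?thesis using \<open>U \<in> \<U>\<close> by (auto simp: A_def clopen_of_def)
  qed
  then obtain F where F: "F \<subseteq> A" "finite F" "\<forall>x. ultrafilter x \<longrightarrow> (\<exists>a\<in>F. a \<in> x)"
    using clopen_cover_finite_subcover by meson
  have "\<forall>a\<in>A. \<exists>U. U \<in> \<U> \<and> clopen_of a \<subseteq> U" by (auto simp: A_def)
  then obtain V where V: "\<forall>a\<in>A. V a \<in> \<U> \<and> clopen_of a \<subseteq> V a"
    by (rule bchoice[THEN exE])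
  have "x \<in> \<Union>(V ` F)" if "ultrafilter x" for x
  proof -
    obtain a where "a \<in> F" "a \<in> x" using F(3) \<open>ultrafilter x\<close> by blast
    then have "x \<in> V a" using V F(1) \<open>ultrafilter x\<close> by (auto simp: clopen_of_def)
    then show ?thesis using \<open>a \<in> F\<close> by blast
  qed
  then show "\<exists>\<F>. finite \<F> \<and> \<F> \<subseteq> \<U> \<and> topspace (stone_top TYPE('a)) \<subseteq> \<Union>\<F>"
    using F(1,2) V by (intro exI[of _ "V ` F"]) (auto simp: topspace_stone_top)
qed

lemma continuous_map_stone_top_bounded:
  assumes "continuous_map (stone_top TYPE('a::boolean_algebra)) euclideanreal g"
  obtains C where "0 \<le> C" "\<And>x. ultrafilter x \<Longrightarrow> \<bar>g x\<bar> \<le> C"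
proof -
  have "compactin euclideanreal (g ` topspace (stone_top TYPE('a)))"
    using compact_space_stone_top assms unfolding compact_space_def by (rule image_compactin)
  then have "bounded (g ` topspace (stone_top TYPE('a)))"
    by (simp add: compact_imp_bounded)
  then obtain C where "\<forall>y \<in> g ` topspace (stone_top TYPE('a)). \<bar>y\<bar> \<le> C"
    unfolding bounded_real by blast
  then show ?thesis
    using that[of "\<bar>C\<bar>"] by (force simp: topspace_stone_top)
qed

definition oscillation_cover :: "('a::boolean_algebra set \<Rightarrow> real) \<Rightarrow> real \<Rightarrow> 'a set \<Rightarrow> bool" where
  "oscillation_cover g e F \<longleftrightarrow> finite F \<and> (\<forall>x. ultrafilter x \<longrightarrow> (\<exists>a\<in>F. a \<in> x)) \<and>
     (\<forall>a\<in>F. \<forall>x y. ultrafilter x \<longrightarrow> ultrafilter y \<longrightarrow> a \<in> x \<longrightarrow> a \<in> y \<longrightarrow> \<bar>g x - g y\<bar> < e)"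

lemma continuous_map_stone_top_oscillation_cover:
  assumes g: "continuous_map (stone_top TYPE('a::boolean_algebra)) euclideanreal g" and "e > 0"
  shows "\<exists>F. oscillation_cover g e F"
proof -
  define A where
    "A = {a. \<forall>x y. ultrafilter x \<longrightarrow> ultrafilter y \<longrightarrow> a \<in> x \<longrightarrow> a \<in> y \<longrightarrow> \<bar>g x - g y\<bar> < e}"
  have "\<exists>a\<in>A. a \<in> x" if x: "ultrafilter x" for x
  proof -
    let ?S = "{z \<in> topspace (stone_top TYPE('a)). g z \<in> ball (g x) (e/2)}"
    have "openin (stone_top TYPE('a)) ?S"
      by (rule openin_continuous_map_preimage[OF g]) simp
    moreover have "x \<in> ?S" using x \<open>e > 0\<close> by (simp add: topspace_stone_top)
    ultimately obtain a where a: "x \<in> clopen_of a" "clopen_of a \<subseteq> ?S"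
      using stone_top_clopen_basis by blast
    have "\<bar>g z - g w\<bar> < e" if "ultrafilter z" "ultrafilter w" "a \<in> z" "a \<in> w" for z w
    proof -
      have "z \<in> ?S" "w \<in> ?S" using a(2) that by (auto simp: clopen_of_def)
      then have "\<bar>g x - g z\<bar> < e/2" "\<bar>g x - g w\<bar> < e/2" by (auto simp: dist_real_def)
      then show ?thesis by arith
    qed
    then show ?thesis using a(1) by (auto simp: A_def clopen_of_def)
  qed
  then obtain F where "F \<subseteq> A" "finite F" "\<forall>x. ultrafilter x \<longrightarrow> (\<exists>a\<in>F. a \<in> x)"
    using clopen_cover_finite_subcover[of A] by blast
  then show ?thesis unfolding oscillation_cover_def A_def by blast
qed

lemma ultrafilter_stone_map:
  assumes "ba_hom \<phi>" "ultrafilter y"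
  shows "ultrafilter (stone_map \<phi> y)"
  using assms unfolding ultrafilter_def stone_map_def ba_hom_def
  by (auto simp del: compl_le_compl_iff) (metis inf.absorb_iff1)

lemma stone_map_preimage_clopen_of:
  assumes "ba_hom \<phi>"
  shows "stone_map \<phi> -` clopen_of a \<inter> topspace (stone_top TYPE('b::boolean_algebra)) = clopen_of (\<phi> a :: 'b)"
  using ultrafilter_stone_map[OF assms] by (auto simp: topspace_stone_top clopen_of_def stone_map_def)

lemma continuous_map_stone_map:
  fixes \<phi> :: "'a::boolean_algebra \<Rightarrow> 'b::boolean_algebra"
  assumes "ba_hom \<phi>"
  shows "continuous_map (stone_top TYPE('b)) (stone_top TYPE('a)) (stone_map \<phi>)"
proof (unfold stone_top_def, rule continuous_on_generated_topo, goal_cases)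
  case (1 U)
  then show ?case
    using stone_map_preimage_clopen_of[OF assms] openin_clopen_of by (auto simp: stone_top_def)
next
  case 2
  then show ?case
    using ultrafilter_stone_map[OF assms] topspace_stone_top[where 'a='a]
    by (auto simp: stone_top_def clopen_of_def)
qed

section \<open>Borel sets and Radon measures\<close>

definition borel_of :: "'x topology \<Rightarrow> 'x measure" where
  "borel_of X = sigma (topspace X) {U. openin X U}"

lemma space_borel_of [simp]: "space (borel_of X) = topspace X"
  unfolding borel_of_def by (rule space_measure_of) (auto dest: openin_subset)

lemma sets_borel_of [simp]: "sets (borel_of X) = borel_sets X"
  unfolding borel_of_def borel_sets_def by (rule sets_measure_of) (auto dest: openin_subset)

lemma openin_in_borel_sets: "openin X U \<Longrightarrow> U \<in> borel_sets X"
  unfolding borel_sets_def by (rule sigma_sets.Basic) simp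

lemma closedin_in_borel_sets:
  assumes "closedin X U"
  shows "U \<in> borel_sets X"
proof -
  have "topspace X - (topspace X - U) \<in> borel_sets X"
    using assms unfolding borel_sets_def closedin_def by (intro sigma_sets.Compl sigma_sets.Basic) auto
  then show ?thesis using closedin_subset[OF assms] by (simp add: Diff_Diff_Int Int_absorb1)
qed

lemma measurable_continuous_map:
  assumes "continuous_map X Y f" "sets M = borel_sets X" "space M = topspace X"
  shows "f \<in> measurable M (borel_of Y)"
  unfolding borel_of_def
proof (rule measurable_measure_of)
  show "{U. openin Y U} \<subseteq> Pow (topspace Y)" by (auto dest: openin_subset)
  show "f \<in> space M \<rightarrow> topspace Y" using assms by (auto simp: continuous_map_def)
  fix U assume "U \<in> {U. openin Y U}"
  then have "openin X {x \<in> topspace X. f x \<in> U}"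
    using assms(1) by (simp add: openin_continuous_map_preimage)
  moreover have "f -` U \<inter> space M = {x \<in> topspace X. f x \<in> U}" using assms(3) by auto
  ultimately show "f -` U \<inter> space M \<in> sets M" using assms(2) openin_in_borel_sets by metis
qed

lemma borel_measurable_continuous_map:
  assumes "continuous_map X euclideanreal g" "sets M = borel_sets X" "space M = topspace X"
  shows "g \<in> borel_measurable M"
proof -
  have "sets (borel_of euclideanreal) = sets (borel :: real measure)"
    by (simp add: borel_sets_def sets_borel)
  then show ?thesis
    using measurable_continuous_map[OF assms] measurable_cong_sets by blast
qed

lemma nn_integral_add_measures:
  assumes sets_N: "sets N = sets M" and sets_K: "sets K = sets M"
    and emeasure_M: "\<And>A. A \<in> sets M \<Longrightarrow> emeasure M A = emeasure N A + emeasure K A"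
    and u: "u \<in> borel_measurable M"
  shows "(\<integral>\<^sup>+x. u x \<partial>M) = (\<integral>\<^sup>+x. u x \<partial>N) + (\<integral>\<^sup>+x. u x \<partial>K)"
proof -
  have space: "space N = space M" "space K = space M"
    using sets_eq_imp_space_eq sets_N sets_K by metis+
  have meas: "f \<in> borel_measurable N" "f \<in> borel_measurable K"
    if "f \<in> borel_measurable M" for f :: "_ \<Rightarrow> ennreal"
    using that measurable_cong_sets[OF sets_N refl] measurable_cong_sets[OF sets_K refl] by auto
  show ?thesis using u
  proof (induction rule: borel_measurable_induct)
    case (cong f g)
    then show ?case using space by (metis nn_integral_cong)
  next
    case (set A)
    then show ?case using sets_N sets_K emeasure_M by (simp add: nn_integral_indicator)
  next
    case (mult u c)
    then show ?case using meas[OF mult(2)] by (simp add: nn_integral_cmult distrib_left)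
  next
    case (add u v)
    then show ?case using meas[OF add.hyps(1)] meas[OF add.hyps(3)] by (simp add: nn_integral_add add_ac)
  next
    case (seq U)
    have "(\<integral>\<^sup>+x. (SUP i. U i) x \<partial>L) = (SUP i. \<integral>\<^sup>+x. U i x \<partial>L)"
      if "\<And>i. U i \<in> borel_measurable L" for L
      unfolding SUP_apply by (rule nn_integral_monotone_convergence_SUP[OF seq.hyps(3) that])
    moreover have "incseq (\<lambda>i. \<integral>\<^sup>+x. U i x \<partial>L)" for L
      using seq.hyps(3) by (auto simp: incseq_def le_fun_def intro!: nn_integral_mono)
    ultimately show ?case
      using seq.hyps(1) seq.IH meas[OF seq.hyps(1)] by (simp add: ennreal_SUP_add)
  qed
qed

lemma integral_add_measures:
  fixes g :: "'a \<Rightarrow> real"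
  assumes "finite_measure M" "finite_measure N" "finite_measure K"
    and sets_N: "sets N = sets M" and sets_K: "sets K = sets M"
    and measure_M: "\<And>A. A \<in> sets M \<Longrightarrow> measure M A = measure N A + measure K A"
    and g: "g \<in> borel_measurable M" and bounded: "\<And>x. x \<in> space M \<Longrightarrow> \<bar>g x\<bar> \<le> C"
  shows "integral\<^sup>L M g = integral\<^sup>L N g + integral\<^sup>L K g"
proof -
  interpret M: finite_measure M by fact
  interpret N: finite_measure N by fact
  interpret K: finite_measure K by fact
  have space: "space N = space M" "space K = space M"
    using sets_eq_imp_space_eq sets_N sets_K by metis+
  have emeasure_M: "emeasure M A = emeasure N A + emeasure K A" if "A \<in> sets M" for A
  proof -
    have "emeasure M A = ennreal (measure N A + measure K A)"
      using measure_M[OF that] by (simp add: M.emeasure_eq_measure)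
    also have "\<dots> = emeasure N A + emeasure K A"
      by (simp add: ennreal_plus N.emeasure_eq_measure K.emeasure_eq_measure)
    finally show ?thesis .
  qed
  have meas: "g \<in> borel_measurable N" "g \<in> borel_measurable K"
    using g measurable_cong_sets[OF sets_N refl] measurable_cong_sets[OF sets_K refl] by auto
  have integrable: "integrable L g"
    if "finite_measure L" "g \<in> borel_measurable L" "space L = space M" for L
    using that bounded by (intro finite_measure.integrable_const_bound[where B=C]) auto
  have int_M: "integrable M g" and int_N: "integrable N g" and int_K: "integrable K g"
    using integrable[of M] integrable[of N] integrable[of K] g meas space assms(1-3) by auto
  have "(\<integral>\<^sup>+x. ennreal (f x) \<partial>M) = (\<integral>\<^sup>+x. ennreal (f x) \<partial>N) + (\<integral>\<^sup>+x. ennreal (f x) \<partial>K)"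
    if "f \<in> borel_measurable M" for f
    using that by (intro nn_integral_add_measures[OF sets_N sets_K emeasure_M]) auto
  note add = this[of g] this[of "\<lambda>x. - g x"]
  have finite: "(\<integral>\<^sup>+x. ennreal (g x) \<partial>L) < top" "(\<integral>\<^sup>+x. ennreal (- g x) \<partial>L) < top"
    if "integrable L g" for L
    using that unfolding real_integrable_def by (auto simp: less_top)
  show ?thesis
    unfolding real_lebesgue_integral_def[OF int_M] real_lebesgue_integral_def[OF int_N]
      real_lebesgue_integral_def[OF int_K]
    using add g finite[OF int_N] finite[OF int_K] by (simp add: enn2real_plus)
qed

definition signed_of_radon :: "'x topology \<Rightarrow> 'x measure \<Rightarrow> 'x set \<Rightarrow> real" where
  "signed_of_radon X N B = (if B \<in> borel_sets X then measure N B else 0)"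

lemma radon_measure_null_measure: "radon_measure X N \<Longrightarrow> radon_measure X (null_measure N)"
  unfolding radon_measure_def by (simp add: finite_measureI SUP_constant bot_ennreal)

lemma signed_radon_signed_of_radon: "radon_measure X N \<Longrightarrow> signed_radon X (signed_of_radon X N)"
  unfolding signed_radon_def signed_of_radon_def using radon_measure_null_measure
  by (intro exI[of _ N] exI[of _ "null_measure N"]) auto

text \<open>radon_decomp chooses an arbitrary decomposition; the integral does not depend on it.\<close>

lemma signed_integral_signed_of_radon:
  assumes N: "radon_measure X N" and g: "g \<in> borel_measurable (borel_of X)"
    and bounded: "\<And>x. x \<in> topspace X \<Longrightarrow> \<bar>g x\<bar> \<le> C"
  shows "signed_integral X (signed_of_radon X N) g = integral\<^sup>L N g"
proof -
  obtain M1 M2 where decomp: "radon_decomp X (signed_of_radon X N) = (M1, M2)" by fastforce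
  have "\<exists>p. case p of (M1, M2) \<Rightarrow> radon_measure X M1 \<and> radon_measure X M2 \<and>
     (\<forall>B. signed_of_radon X N B = (if B \<in> borel_sets X then measure M1 B - measure M2 B else 0))"
    using signed_radon_signed_of_radon[OF N] unfolding signed_radon_def by auto
  from someI_ex[OF this] have M: "radon_measure X M1" "radon_measure X M2"
    "\<And>B. B \<in> borel_sets X \<Longrightarrow> measure N B = measure M1 B - measure M2 B"
    using decomp unfolding radon_decomp_def by (auto simp: signed_of_radon_def split: if_splits)
  have "integral\<^sup>L M1 g = integral\<^sup>L N g + integral\<^sup>L M2 g"
  proof (rule integral_add_measures[where C=C])
    show "g \<in> borel_measurable M1"
      using g M(1) measurable_cong_sets[of "borel_of X" M1] by (auto simp: radon_measure_def)
  qed (use M N bounded in \<open>auto simp: radon_measure_def\<close>)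
  then show ?thesis unfolding signed_integral_def decomp by simp
qed

lemma abs_le_tv_norm:
  assumes "signed_radon X \<nu>" "B \<in> borel_sets X"
  shows "\<bar>\<nu> B\<bar> \<le> tv_norm X \<nu>"
proof -
  obtain M1 M2 where M: "radon_measure X M1" "radon_measure X M2"
    "\<And>B. \<nu> B = (if B \<in> borel_sets X then measure M1 B - measure M2 B else 0)"
    using assms(1) unfolding signed_radon_def by blast
  interpret M1: finite_measure M1 using M by (auto simp: radon_measure_def)
  interpret M2: finite_measure M2 using M by (auto simp: radon_measure_def)
  let ?S = "{P. finite P \<and> P \<subseteq> borel_sets X \<and> disjoint P}"
  have "(\<Sum>C\<in>P. \<bar>\<nu> C\<bar>) \<le> measure M1 (space M1) + measure M2 (space M2)" if P: "P \<in> ?S" for P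
  proof -
    have sets: "P \<subseteq> sets M1" "P \<subseteq> sets M2"
      using P M by (auto simp: radon_measure_def)
    have "(\<Sum>C\<in>P. \<bar>\<nu> C\<bar>) \<le> (\<Sum>C\<in>P. measure M1 C + measure M2 C)"
      using P M(3) by (intro sum_mono) (auto simp: abs_le_iff)
    also have "\<dots> = measure M1 (\<Union>P) + measure M2 (\<Union>P)"
      using P sets by (simp add: sum.distrib measure_Union' M1.fmeasurable_eq_sets
          M2.fmeasurable_eq_sets subset_eq)
    also have "\<dots> \<le> measure M1 (space M1) + measure M2 (space M2)"
      using P sets by (intro add_mono M1.bounded_measure M2.bounded_measure)
    finally show ?thesis .
  qed
  then have "bdd_above ((\<lambda>P. \<Sum>C\<in>P. \<bar>\<nu> C\<bar>) ` ?S)" by (intro bdd_aboveI2)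
  moreover have "{B} \<in> ?S" using assms(2) by auto
  ultimately have "(\<Sum>C\<in>{B}. \<bar>\<nu> C\<bar>) \<le> tv_norm X \<nu>"
    unfolding tv_norm_def by (intro cSUP_upper)
  then show ?thesis by simp
qed

lemma bounded_functional_evaluation:
  assumes "B \<in> borel_sets X"
  shows "bounded_functional X (\<lambda>\<nu>. \<nu> B)"
  unfolding bounded_functional_def using abs_le_tv_norm[OF _ assms]
  by (auto intro!: exI[of _ 1])

lemma grothendieck_property_tendsto_Borel:
  assumes "grothendieck_property TYPE('a::boolean_algebra)"
    and "\<And>n. signed_radon (stone_top TYPE('a)) (\<nu>s n)" "signed_radon (stone_top TYPE('a)) \<nu>"
    and "weak_star_conv (stone_top TYPE('a)) \<nu>s \<nu>"
    and "B \<in> borel_sets (stone_top TYPE('a))"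
  shows "(\<lambda>n. \<nu>s n B) \<longlonglongrightarrow> \<nu> B"
proof -
  have "weak_conv (stone_top TYPE('a)) \<nu>s \<nu>"
    using assms(1-4) unfolding grothendieck_property_def by blast
  then show ?thesis
    unfolding weak_conv_def using bounded_functional_evaluation[OF assms(5)] by blast
qed

lemma emeasure_distr_restrict_space:
  assumes f: "f \<in> measurable M N" and D: "D \<in> sets M" and E: "E \<in> sets N"
  shows "emeasure (distr (restrict_space M D) N f) E = emeasure M (f -` E \<inter> D)"
proof -
  have D_sub: "D \<subseteq> space M" using D by (rule sets.sets_into_space)
  have "emeasure (distr (restrict_space M D) N f) E = emeasure (restrict_space M D) (f -` E \<inter> D)"
    using measurable_restrict_space1[OF f] E D_sub
    by (simp add: emeasure_distr space_restrict_space Int_absorb2)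
  also have "\<dots> = emeasure M (f -` E \<inter> D)"
    using D D_sub by (intro emeasure_restrict_space) (auto simp: Int_absorb2)
  finally show ?thesis .
qed

lemma measure_distr_restrict_space:
  assumes "f \<in> measurable M N" "D \<in> sets M" "E \<in> sets N"
  shows "measure (distr (restrict_space M D) N f) E = measure M (f -` E \<inter> D)"
  using emeasure_distr_restrict_space[OF assms] by (simp add: measure_def)

lemma radon_measure_distr_restrict_space:
  assumes M: "radon_measure X M" and f: "continuous_map X Y f" and Y: "Hausdorff_space Y"
    and D: "D \<in> sets M"
  shows "radon_measure Y (distr (restrict_space M D) (borel_of Y) f)" (is "radon_measure Y ?N")
proof -
  have sets_M: "sets M = borel_sets X" "space M = topspace X" and "finite_measure M"
    using M by (auto simp: radon_measure_def)
  have f_meas: "f \<in> measurable M (borel_of Y)"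
    by (rule measurable_continuous_map[OF f sets_M])
  have preimage: "f -` E \<inter> D \<in> sets M" if "E \<in> borel_sets Y" for E
  proof -
    have "f -` E \<inter> space M \<inter> D \<in> sets M" using measurable_sets[OF f_meas] that D by simp
    moreover have "f -` E \<inter> space M \<inter> D = f -` E \<inter> D" using sets.sets_into_space[OF D] by auto
    ultimately show ?thesis by simp
  qed
  have compact_borel: "K \<in> borel_sets Y" if "compactin Y K" for K
    using closedin_in_borel_sets compactin_imp_closedin[OF Y that] by blast
  note emeasure_N = emeasure_distr_restrict_space[OF f_meas D, simplified]
  have "emeasure ?N E = (SUP K \<in> {K. compactin Y K \<and> K \<subseteq> E}. emeasure ?N K)"
    if E: "E \<in> borel_sets Y" for E
  proof (rule antisym)
    have "emeasure ?N E = (SUP K \<in> {K. compactin X K \<and> K \<subseteq> f -` E \<inter> D}. emeasure M K)"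
      using M preimage[OF E] sets_M by (simp add: emeasure_N[OF E] radon_measure_def)
    also have "\<dots> \<le> (SUP K \<in> {K. compactin Y K \<and> K \<subseteq> E}. emeasure ?N K)"
    proof (rule SUP_mono)
      fix K assume K: "K \<in> {K. compactin X K \<and> K \<subseteq> f -` E \<inter> D}"
      then have fK: "compactin Y (f ` K)" "f ` K \<subseteq> E" using image_compactin[OF _ f] by auto
      have "emeasure M K \<le> emeasure ?N (f ` K)"
        using K preimage[OF compact_borel[OF fK(1)]]
        by (auto simp: emeasure_N[OF compact_borel[OF fK(1)]] intro!: emeasure_mono)
      with fK show "\<exists>K'\<in>{K. compactin Y K \<and> K \<subseteq> E}. emeasure M K \<le> emeasure ?N K'"
        by blast
    qed
    finally show "emeasure ?N E \<le> (SUP K \<in> {K. compactin Y K \<and> K \<subseteq> E}. emeasure ?N K)" .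
  next
    show "(SUP K \<in> {K. compactin Y K \<and> K \<subseteq> E}. emeasure ?N K) \<le> emeasure ?N E"
      using E compact_borel by (intro SUP_least emeasure_mono) auto
  qed
  moreover have "finite_measure ?N"
    using \<open>finite_measure M\<close> D measurable_restrict_space1[OF f_meas]
    by (intro finite_measure.finite_measure_distr finite_measure_restrict_space)
  ultimately show ?thesis
    unfolding radon_measure_def by simp
qed

section \<open>Convergence of image measures\<close>

lemma tendsto_of_uniform_error_bounds:
  fixes x :: "nat \<Rightarrow> real"
  assumes "\<And>e. e > 0 \<Longrightarrow> \<exists>s. s \<longlonglongrightarrow> 0 \<and> (\<forall>n. \<bar>x n - l\<bar> \<le> e + s n)"
  shows "x \<longlonglongrightarrow> l"
  unfolding LIMSEQ_iff
proof (intro allI impI)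
  fix r :: real assume "r > 0"
  then obtain s where "s \<longlonglongrightarrow> 0" and bound: "\<And>n. \<bar>x n - l\<bar> \<le> r / 2 + s n"
    using assms[of "r / 2"] by auto
  then obtain N where "\<And>n. n \<ge> N \<Longrightarrow> \<bar>s n\<bar> < r / 2"
    using \<open>r > 0\<close> unfolding LIMSEQ_iff by (metis half_gt_zero real_norm_def diff_zero)
  then show "\<exists>N. \<forall>n\<ge>N. norm (x n - l) < r"
    using bound by (metis abs_less_iff add_less_cancel_left field_sum_of_halves order_le_less_trans real_norm_def)
qed

lemma (in finite_measure) abs_integral_diff_le:
  fixes u v :: "'a \<Rightarrow> real"
  assumes "u \<in> borel_measurable M" "v \<in> borel_measurable M" "E \<in> sets M" "0 \<le> e"
    and "\<And>x. x \<in> space M \<Longrightarrow> \<bar>u x\<bar> \<le> C" "\<And>x. x \<in> space M \<Longrightarrow> \<bar>v x\<bar> \<le> C"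
    and close: "\<And>x. x \<in> space M - E \<Longrightarrow> \<bar>u x - v x\<bar> \<le> e"
  shows "\<bar>integral\<^sup>L M u - integral\<^sup>L M v\<bar> \<le> e * measure M (space M) + 2 * C * measure M E"
proof -
  have int: "integrable M u" "integrable M v"
    using assms by (auto intro!: integrable_const_bound[where B=C])
  have int_E: "integrable M (\<lambda>x. indicator E x :: real)"
    using assms(3) by (auto intro!: integrable_const_bound[where B=1] split: split_indicator)
  have "\<bar>integral\<^sup>L M u - integral\<^sup>L M v\<bar> = \<bar>\<integral>x. u x - v x \<partial>M\<bar>"
    using int by simp
  also have "\<dots> \<le> (\<integral>x. \<bar>u x - v x\<bar> \<partial>M)"
    by (rule integral_abs_bound)
  also have "\<dots> \<le> (\<integral>x. e + 2 * C * indicator E x \<partial>M)"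
  proof (rule integral_mono)
    show "\<bar>u x - v x\<bar> \<le> e + 2 * C * indicator E x" if "x \<in> space M" for x
      using that assms(4) assms(5,6)[OF that] close[of x] by (cases "x \<in> E") auto
  qed (use int int_E in auto)
  also have "\<dots> = e * measure M (space M) + 2 * C * measure M E"
    using int_E assms(3) by simp
  finally show ?thesis .
qed

lemma (in finite_measure) tendsto_measure_sym_diff_zero:
  assumes "\<And>n. P n \<in> sets M" "Q \<in> sets M"
    and setwise: "\<And>D. D \<in> sets M \<Longrightarrow> (\<lambda>n. measure M (P n \<inter> D)) \<longlonglongrightarrow> measure M (Q \<inter> D)"
  shows "(\<lambda>n. measure M ((P n - Q) \<union> (Q - P n))) \<longlonglongrightarrow> 0"
proof -
  have "measure M ((P n - Q) \<union> (Q - P n)) = measure M (P n - Q) + (measure M Q - measure M (P n \<inter> Q))"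
    for n
  proof -
    have "Q - P n = Q - (P n \<inter> Q)" by blast
    then have "measure M (Q - P n) = measure M Q - measure M (P n \<inter> Q)"
      using assms(1,2) by (simp add: finite_measure_Diff)
    then show ?thesis
      using assms(1,2) by (subst finite_measure_Union) auto
  qed
  moreover have "P n \<inter> (space M - Q) = P n - Q" for n
    using sets.sets_into_space[OF assms(1)] by blast
  then have "(\<lambda>n. measure M (P n - Q) + (measure M Q - measure M (P n \<inter> Q))) \<longlonglongrightarrow> 0 + (measure M Q - measure M Q)"
    using setwise[of Q] setwise[of "space M - Q"] assms(2)
    by (intro tendsto_add tendsto_diff tendsto_const) (auto simp: Diff_Int_distrib)
  ultimately show ?thesis by simp
qed

lemma measurable_stone_map:
  assumes "radon_measure (stone_top TYPE('b::boolean_algebra)) M" "ba_hom (\<psi> :: 'a::boolean_algebra \<Rightarrow> 'b)"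
  shows "stone_map \<psi> \<in> measurable M (borel_of (stone_top TYPE('a)))"
  using assms(1) continuous_map_stone_map[OF assms(2)]
  by (intro measurable_continuous_map) (auto simp: radon_measure_def)

lemma clopen_of_in_sets:
  "radon_measure (stone_top TYPE('b::boolean_algebra)) M \<Longrightarrow> clopen_of (b :: 'b) \<in> sets M"
  using openin_in_borel_sets[OF openin_clopen_of] by (simp add: radon_measure_def)

lemma borel_measurable_stone_map_comp:
  assumes "radon_measure (stone_top TYPE('b::boolean_algebra)) M" "ba_hom \<theta>"
    and "continuous_map (stone_top TYPE('a::boolean_algebra)) euclideanreal g"
  shows "(\<lambda>y. g (stone_map (\<theta> :: 'a \<Rightarrow> 'b) y)) \<in> borel_measurable M"
  using continuous_map_compose[OF continuous_map_stone_map[OF assms(2)] assms(3)] assms(1)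
  unfolding comp_def by (intro borel_measurable_continuous_map) (auto simp: radon_measure_def)

lemma measure_disagreement_le:
  assumes M: "radon_measure (stone_top TYPE('b::boolean_algebra)) M"
    and M_clopen: "\<And>b. measure M (clopen_of b) = \<mu> b" and "finite F"
  shows "measure M (\<Union>a\<in>F. clopen_of (sym_diff (\<psi> a) (\<phi> a :: 'b))) \<le> (\<Sum>a\<in>F. d_metric \<mu> (\<psi> a) (\<phi> a))"
  unfolding d_metric_def M_clopen[symmetric] using \<open>finite F\<close> clopen_of_in_sets[OF M]
  by (intro measure_UNION_le) auto

lemma stone_map_values_close:
  assumes "ba_hom \<psi>" "ba_hom \<phi>" "ultrafilter y"
    and F: "oscillation_cover g e F" and agree: "\<And>a. a \<in> F \<Longrightarrow> \<psi> a \<in> y \<longleftrightarrow> \<phi> a \<in> y"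
  shows "\<bar>g (stone_map \<psi> y) - g (stone_map \<phi> y)\<bar> < e"
proof -
  have uf: "ultrafilter (stone_map \<psi> y)" "ultrafilter (stone_map \<phi> y)"
    using ultrafilter_stone_map assms(1-3) by blast+
  then obtain a where "a \<in> F" "a \<in> stone_map \<phi> y"
    using F unfolding oscillation_cover_def by blast
  moreover from this have "a \<in> stone_map \<psi> y" using agree by (simp add: stone_map_def)
  ultimately show ?thesis using F uf unfolding oscillation_cover_def by blast
qed

lemma abs_integral_stone_map_diff_le:
  fixes \<mu> :: "'b::boolean_algebra \<Rightarrow> real" and \<psi> \<phi> :: "'a::boolean_algebra \<Rightarrow> 'b"
  assumes M: "radon_measure (stone_top TYPE('b)) M"
    and M_clopen: "\<And>b. measure M (clopen_of b) = \<mu> b"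
    and hom: "ba_hom \<psi>" "ba_hom \<phi>"
    and g: "continuous_map (stone_top TYPE('a)) euclideanreal g"
    and C: "0 \<le> C" "\<And>x. ultrafilter x \<Longrightarrow> \<bar>g x\<bar> \<le> C"
    and h: "h \<in> borel_measurable M" "\<And>y. \<bar>h y\<bar> \<le> 1"
    and "0 \<le> e" and F: "oscillation_cover g e F"
  shows "\<bar>(\<integral>y. h y * g (stone_map \<psi> y) \<partial>M) - (\<integral>y. h y * g (stone_map \<phi> y) \<partial>M)\<bar>
    \<le> e * measure M (space M) + 2 * C * (\<Sum>a\<in>F. d_metric \<mu> (\<psi> a) (\<phi> a))"
proof -
  interpret finite_measure M using M by (simp add: radon_measure_def)
  have space_M: "space M = Collect ultrafilter"
    using M by (simp add: radon_measure_def topspace_stone_top)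
  have "finite F" using F by (simp add: oscillation_cover_def)
  define E where "E = (\<Union>a\<in>F. clopen_of (sym_diff (\<psi> a) (\<phi> a)))"
  have "\<bar>h y * g (stone_map \<theta> y)\<bar> \<le> C" if "ba_hom \<theta>" "y \<in> space M" for \<theta> y
  proof -
    have "\<bar>h y\<bar> * \<bar>g (stone_map \<theta> y)\<bar> \<le> 1 * C"
      using h(2) C ultrafilter_stone_map that space_M by (intro mult_mono) auto
    then show ?thesis by (simp add: abs_mult)
  qed
  moreover have "\<bar>h y * g (stone_map \<psi> y) - h y * g (stone_map \<phi> y)\<bar> \<le> e" if "y \<in> space M - E" for y
  proof -
    have "\<bar>g (stone_map \<psi> y) - g (stone_map \<phi> y)\<bar> < e"
      using that hom F
      by (intro stone_map_values_close) (auto simp: space_M E_def clopen_of_def ultrafilter_sym_diff_iff)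
    then have "\<bar>h y\<bar> * \<bar>g (stone_map \<psi> y) - g (stone_map \<phi> y)\<bar> \<le> 1 * e"
      using h(2)[of y] by (intro mult_mono) auto
    then show ?thesis
      by (simp add: abs_mult[symmetric] right_diff_distrib)
  qed
  moreover have "E \<in> sets M" using \<open>finite F\<close> clopen_of_in_sets[OF M] by (auto simp: E_def)
  ultimately have "\<bar>(\<integral>y. h y * g (stone_map \<psi> y) \<partial>M) - (\<integral>y. h y * g (stone_map \<phi> y) \<partial>M)\<bar>
      \<le> e * measure M (space M) + 2 * C * measure M E"
    using \<open>0 \<le> e\<close> hom h(1) borel_measurable_stone_map_comp[OF M _ g]
    by (intro abs_integral_diff_le) auto
  moreover have "2 * C * measure M E \<le> 2 * C * (\<Sum>a\<in>F. d_metric \<mu> (\<psi> a) (\<phi> a))"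
    unfolding E_def using C(1) measure_disagreement_le[OF M M_clopen \<open>finite F\<close>]
    by (intro mult_left_mono) auto
  ultimately show ?thesis by linarith
qed

lemma tendsto_integral_stone_map:
  fixes \<mu> :: "'b::boolean_algebra \<Rightarrow> real" and \<phi>s :: "nat \<Rightarrow> 'a::boolean_algebra \<Rightarrow> 'b"
  assumes M: "radon_measure (stone_top TYPE('b)) M"
    and M_clopen: "\<And>b. measure M (clopen_of b) = \<mu> b"
    and hom: "\<And>n. ba_hom (\<phi>s n)" "ba_hom \<phi>" and conv: "pointwise_metric_conv \<mu> \<phi>s \<phi>"
    and g: "continuous_map (stone_top TYPE('a)) euclideanreal g"
    and h: "h \<in> borel_measurable M" "\<And>y. \<bar>h y\<bar> \<le> 1"
  shows "(\<lambda>n. \<integral>y. h y * g (stone_map (\<phi>s n) y) \<partial>M) \<longlonglongrightarrow> (\<integral>y. h y * g (stone_map \<phi> y) \<partial>M)"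
proof (rule tendsto_of_uniform_error_bounds)
  obtain C where C: "0 \<le> C" "\<And>x. ultrafilter x \<Longrightarrow> \<bar>g x\<bar> \<le> C"
    using continuous_map_stone_top_bounded[OF g] by blast
  fix e :: real assume "e > 0"
  let ?m = "measure M (space M)"
  have "0 < ?m + 1" using measure_nonneg[of M "space M"] by linarith
  then have "0 < e / (?m + 1)" and "e / (?m + 1) * ?m \<le> e"
    using \<open>e > 0\<close> by (simp_all only: times_divide_eq_left pos_divide_le_eq pos_less_divide_eq)
      (simp_all add: algebra_simps)
  then obtain F where F: "oscillation_cover g (e / (?m + 1)) F"
    using continuous_map_stone_top_oscillation_cover[OF g] by blast
  define s where "s n = 2 * C * (\<Sum>a\<in>F. d_metric \<mu> (\<phi>s n a) (\<phi> a))" for n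
  have "s \<longlonglongrightarrow> 0"
    unfolding s_def using conv unfolding pointwise_metric_conv_def
    by (intro tendsto_mult_right_zero tendsto_null_sum) auto
  moreover have "\<bar>(\<integral>y. h y * g (stone_map (\<phi>s n) y) \<partial>M) - (\<integral>y. h y * g (stone_map \<phi> y) \<partial>M)\<bar>
      \<le> e + s n" for n
  proof -
    have "\<bar>(\<integral>y. h y * g (stone_map (\<phi>s n) y) \<partial>M) - (\<integral>y. h y * g (stone_map \<phi> y) \<partial>M)\<bar>
        \<le> e / (?m + 1) * ?m + s n"
      unfolding s_def using M M_clopen hom g C h F less_imp_le[OF \<open>0 < e / (?m + 1)\<close>]
      by (intro abs_integral_stone_map_diff_le) auto
    with \<open>e / (?m + 1) * ?m \<le> e\<close> show ?thesis by linarith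
  qed
  ultimately show "\<exists>s. s \<longlonglongrightarrow> 0 \<and> (\<forall>n. \<bar>(\<integral>y. h y * g (stone_map (\<phi>s n) y) \<partial>M) -
      (\<integral>y. h y * g (stone_map \<phi> y) \<partial>M)\<bar> \<le> e + s n)"
    by blast
qed

lemma signed_integral_distr_stone_map:
  fixes \<psi> :: "'a::boolean_algebra \<Rightarrow> 'b::boolean_algebra"
  assumes M: "radon_measure (stone_top TYPE('b)) M" and \<psi>: "ba_hom \<psi>" and D: "D \<in> sets M"
    and g: "continuous_map (stone_top TYPE('a)) euclideanreal g"
  shows "signed_integral (stone_top TYPE('a))
      (signed_of_radon (stone_top TYPE('a)) (distr (restrict_space M D) (borel_of (stone_top TYPE('a))) (stone_map \<psi>))) g
    = (\<integral>y. indicator D y * g (stone_map \<psi> y) \<partial>M)"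
proof -
  let ?X = "stone_top TYPE('a)"
  obtain C where "\<And>x. ultrafilter x \<Longrightarrow> \<bar>g x\<bar> \<le> C"
    using continuous_map_stone_top_bounded[OF g] by metis
  then have C: "\<And>x. x \<in> topspace ?X \<Longrightarrow> \<bar>g x\<bar> \<le> C"
    by (simp add: topspace_stone_top)
  have g_meas: "g \<in> borel_measurable (borel_of ?X)"
    using g by (rule borel_measurable_continuous_map) simp_all
  have "stone_map \<psi> \<in> measurable (restrict_space M D) (borel_of ?X)"
    using measurable_stone_map[OF M \<psi>] by (rule measurable_restrict_space1)
  then have "integral\<^sup>L (distr (restrict_space M D) (borel_of ?X) (stone_map \<psi>)) g
      = (\<integral>y. g (stone_map \<psi> y) \<partial>restrict_space M D)"
    using g_meas by (rule integral_distr)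
  also have "\<dots> = (\<integral>y. indicator D y * g (stone_map \<psi> y) \<partial>M)"
    using D by (simp add: integral_restrict_space)
  finally show ?thesis
    using radon_measure_distr_restrict_space[OF M continuous_map_stone_map[OF \<psi>] Hausdorff_space_stone_top D]
    by (simp add: signed_integral_signed_of_radon[OF _ g_meas C])
qed

lemma tendsto_measure_stone_map_preimage:
  fixes \<mu> :: "'b::boolean_algebra \<Rightarrow> real" and \<phi>s :: "nat \<Rightarrow> 'a::boolean_algebra \<Rightarrow> 'b"
  assumes G: "grothendieck_property TYPE('a)"
    and M: "radon_measure (stone_top TYPE('b)) M"
    and M_clopen: "\<And>b. measure M (clopen_of b) = \<mu> b"
    and hom: "\<And>n. ba_hom (\<phi>s n)" "ba_hom \<phi>" and conv: "pointwise_metric_conv \<mu> \<phi>s \<phi>"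
    and D: "D \<in> sets M" and B: "B \<in> borel_sets (stone_top TYPE('a))"
  shows "(\<lambda>n. measure M (stone_map (\<phi>s n) -` B \<inter> D)) \<longlonglongrightarrow> measure M (stone_map \<phi> -` B \<inter> D)"
proof -
  let ?X = "stone_top TYPE('a)"
  define \<nu> where "\<nu> \<psi> = signed_of_radon ?X (distr (restrict_space M D) (borel_of ?X) (stone_map \<psi>))"
    for \<psi> :: "'a \<Rightarrow> 'b"
  have signed: "signed_radon ?X (\<nu> \<psi>)" if "ba_hom \<psi>" for \<psi>
    unfolding \<nu>_def using M continuous_map_stone_map[OF that] Hausdorff_space_stone_top D
    by (intro signed_radon_signed_of_radon radon_measure_distr_restrict_space)
  have measure_eq: "\<nu> \<psi> B = measure M (stone_map \<psi> -` B \<inter> D)" if "ba_hom \<psi>" for \<psi>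
    using measure_distr_restrict_space[OF measurable_stone_map[OF M that] D, of B] B
    by (simp add: \<nu>_def signed_of_radon_def)
  have "weak_star_conv ?X (\<lambda>n. \<nu> (\<phi>s n)) (\<nu> \<phi>)"
    unfolding weak_star_conv_def
  proof (intro allI impI)
    fix g assume g: "continuous_map ?X euclideanreal g"
    have "(\<lambda>n. \<integral>y. indicator D y * g (stone_map (\<phi>s n) y) \<partial>M) \<longlonglongrightarrow>
        (\<integral>y. indicator D y * g (stone_map \<phi> y) \<partial>M)"
      using D by (intro tendsto_integral_stone_map[OF M M_clopen hom conv g]) (auto split: split_indicator)
    then show "(\<lambda>n. signed_integral ?X (\<nu> (\<phi>s n)) g) \<longlonglongrightarrow> signed_integral ?X (\<nu> \<phi>) g"
      unfolding \<nu>_def signed_integral_distr_stone_map[OF M hom(1) D g]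
        signed_integral_distr_stone_map[OF M hom(2) D g] .
  qed
  then have "(\<lambda>n. \<nu> (\<phi>s n) B) \<longlonglongrightarrow> \<nu> \<phi> B"
    using hom B signed by (intro grothendieck_property_tendsto_Borel[OF G]) auto
  then show ?thesis unfolding measure_eq[OF hom(1)] measure_eq[OF hom(2)] .
qed

theorem corollary5p5:
  fixes \<mu> :: "'b::boolean_algebra \<Rightarrow> real"
    and \<mu>_hat :: "'b set measure"
    and \<phi>s :: "nat \<Rightarrow> 'a::boolean_algebra \<Rightarrow> 'b"
    and \<phi> :: "'a \<Rightarrow> 'b"
  assumes "grothendieck_property TYPE('a)"
    and "metric_ba \<mu>"
    and "radon_extension \<mu> \<mu>_hat"
    and "\<forall>n. ba_hom (\<phi>s n)"
    and "ba_hom \<phi>"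
    and "pointwise_metric_conv \<mu> \<phi>s \<phi>"
  shows "pointwise_borel_metric_conv \<mu>_hat \<phi>s \<phi>"
  unfolding pointwise_borel_metric_conv_def Let_def
proof
  fix B assume B: "B \<in> borel_sets (stone_top TYPE('a))"
  have M: "radon_measure (stone_top TYPE('b)) \<mu>_hat" "\<And>b. measure \<mu>_hat (clopen_of b) = \<mu> b"
    using assms(3) by (auto simp: radon_extension_def)
  interpret finite_measure \<mu>_hat using M(1) by (simp add: radon_measure_def)
  have space: "St TYPE('b) = space \<mu>_hat"
    using M(1) by (simp add: radon_measure_def St_def topspace_stone_top)
  have hom: "\<And>n. ba_hom (\<phi>s n)" using assms(4) by blast
  have preimage_sets: "stone_map \<psi> -` B \<inter> space \<mu>_hat \<in> sets \<mu>_hat" if "ba_hom \<psi>" for \<psi> :: "'a \<Rightarrow> 'b"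
    using measurable_sets[OF measurable_stone_map[OF M(1) that], of B] B by simp
  have setwise: "(\<lambda>n. measure \<mu>_hat (stone_map (\<phi>s n) -` B \<inter> space \<mu>_hat \<inter> D))
      \<longlonglongrightarrow> measure \<mu>_hat (stone_map \<phi> -` B \<inter> space \<mu>_hat \<inter> D)" if D: "D \<in> sets \<mu>_hat" for D
    using tendsto_measure_stone_map_preimage[OF assms(1) M hom assms(5,6) D B] sets.sets_into_space[OF D]
    by (simp add: Int_assoc Int_absorb1)
  show "(\<lambda>n. measure \<mu>_hat ((stone_map (\<phi>s n) -` B \<inter> St TYPE('b) - stone_map \<phi> -` B \<inter> St TYPE('b)) \<union>
      (stone_map \<phi> -` B \<inter> St TYPE('b) - stone_map (\<phi>s n) -` B \<inter> St TYPE('b)))) \<longlonglongrightarrow> 0"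
    unfolding space by (intro tendsto_measure_sym_diff_zero setwise preimage_sets hom assms(5))
qed

end
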